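(* VD satisfies stability: for every finite candidate set $C$, every profile $P$ over $C$ and every ballot $A\subseteq C$, $\mathrm{VD}(P)\cap\mathrm{VD}(P+\{A\})\neq\emptyset$. In contrast, for each $f\in\{\mathrm{MF},\mathrm{BC},\mathrm{MS},\mathrm{FT}\}$ there exist a finite candidate set $C$, a profile $P$ and a ballot $A$ over $C$ with $f(P)\cap f(P+\{A\})=\emptyset$.
   Context: Let $C$ be a finite set of candidates. An approval ballot is a nonempty subset $A\subseteq C$; a profile is a finite sequence of ballots; $P+\{A\}$ is $P$ with the ballot $A$ appended. An axis is a strict linear order $\triangleleft$ on $C$; $a\trianglelefteq b$ means $a\triangleleft b$ or $a=b$. A ballot $A$ is an interval of $\triangleleft$ if for all $a,b\in A$ and every $c$ with $a\triangleleft c\triangleleft b$ we have $c\in A$. For a cost function $\mathrm{cost}_f$, the associated scoring rule returns $f(P)=\arg\min_{\triangleleft}\sum_{A\in P}\mathrm{cost}_f(A,\triangleleft)$ over all axes on $C$. The five rules VD, MF, BC, MS, FT are the scoring rules with costs: $\mathrm{cost}_{\mathrm{VD}}(A,\triangleleft)=0$ if $A$ is an interval of $\triangleleft$ and $1$ otherwise; $\mathrm{cost}_{\mathrm{MF}}(A,\triangleleft)=\min_{x,y\in A,\ x\trianglelefteq y}\big(|\{z\in A: z\triangleleft x \text{ or } y\triangleleft z\}|+|\{z\notin A: x\triangleleft z\triangleleft y\}|\big)$; $\mathrm{cost}_{\mathrm{BC}}(A,\triangleleft)=|\{b\notin A: a\triangleleft b\triangleleft c \text{ for some } a,c\in A\}|$;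 $\mathrm{cost}_{\mathrm{MS}}(A,\triangleleft)=\sum_{x\in C\setminus A}\min\big(|\{y\in A:y\triangleleft x\}|,\,|\{y\in A:x\triangleleft y\}|\big)$; $\mathrm{cost}_{\mathrm{FT}}(A,\triangleleft)=\sum_{x\in C\setminus A}|\{y\in A:y\triangleleft x\}|\cdot|\{y\in A:x\triangleleft y\}|$. *)

theory Defs
  imports Main
begin

text \<open>Axes on a candidate set C: strict linear orders on C, as relations contained in C x C.
  A pair (a,b) in the relation means a is left of b on the axis.\<close>
definition axes :: "'a set \<Rightarrow> ('a \<times> 'a) set set" where
  "axes C = {r. strict_linear_order_on C r \<and> r \<subseteq> C \<times> C}"

definition is_ballot :: "'a set \<Rightarrow> 'a set \<Rightarrow> bool" where
  "is_ballot C A \<longleftrightarrow> A \<noteq> {} \<and> A \<subseteq> C"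

definition is_profile :: "'a set \<Rightarrow> 'a set list \<Rightarrow> bool" where
  "is_profile C P \<longleftrightarrow> (\<forall>A\<in>set P. is_ballot C A)"

definition is_interval :: "('a \<times> 'a) set \<Rightarrow> 'a set \<Rightarrow> bool" where
  "is_interval r A \<longleftrightarrow> (\<forall>a\<in>A. \<forall>b\<in>A. \<forall>c. (a, c) \<in> r \<and> (c, b) \<in> r \<longrightarrow> c \<in> A)"

definition cost_VD :: "'a set \<Rightarrow> 'a set \<Rightarrow> ('a \<times> 'a) set \<Rightarrow> nat" where
  "cost_VD C A r = (if is_interval r A then 0 else 1)"

definition cost_MF :: "'a set \<Rightarrow> 'a set \<Rightarrow> ('a \<times> 'a) set \<Rightarrow> nat" where
  "cost_MF C A r = Min ((\<lambda>(x, y). card {z \<in> A. (z, x) \<in> r \<or> (y, z) \<in> r}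
                                  + card {z \<in> C - A. (x, z) \<in> r \<and> (z, y) \<in> r})
                        ` {(x, y). x \<in> A \<and> y \<in> A \<and> (x = y \<or> (x, y) \<in> r)})"

definition cost_BC :: "'a set \<Rightarrow> 'a set \<Rightarrow> ('a \<times> 'a) set \<Rightarrow> nat" where
  "cost_BC C A r = card {b \<in> C - A. \<exists>a\<in>A. \<exists>c\<in>A. (a, b) \<in> r \<and> (b, c) \<in> r}"

definition cost_MS :: "'a set \<Rightarrow> 'a set \<Rightarrow> ('a \<times> 'a) set \<Rightarrow> nat" where
  "cost_MS C A r = (\<Sum>x\<in>C - A. min (card {y \<in> A. (y, x) \<in> r}) (card {y \<in> A. (x, y) \<in> r}))"

definition cost_FT :: "'a set \<Rightarrow> 'a set \<Rightarrow> ('a \<times> 'a) set \<Rightarrow> nat" where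
  "cost_FT C A r = (\<Sum>x\<in>C - A. card {y \<in> A. (y, x) \<in> r} * card {y \<in> A. (x, y) \<in> r})"

definition total_cost :: "('a set \<Rightarrow> 'a set \<Rightarrow> ('a \<times> 'a) set \<Rightarrow> nat) \<Rightarrow> 'a set \<Rightarrow> 'a set list \<Rightarrow> ('a \<times> 'a) set \<Rightarrow> nat" where
  "total_cost cost C P r = sum_list (map (\<lambda>A. cost C A r) P)"

definition scoring_rule :: "('a set \<Rightarrow> 'a set \<Rightarrow> ('a \<times> 'a) set \<Rightarrow> nat) \<Rightarrow> 'a set \<Rightarrow> 'a set list \<Rightarrow> ('a \<times> 'a) set set" where
  "scoring_rule cost C P = {r \<in> axes C. \<forall>r' \<in> axes C. total_cost cost C P r \<le> total_cost cost C P r'}"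

end

theory Submission
  imports Defs "HOL-Combinatorics.Multiset_Permutations"
begin

text \<open>VD charges each ballot 0 or 1. Among the axes that are optimal for P, take one that is also
  optimal for the new ballot A alone. Any other axis is either optimal for P as well, and then no
  better on A, or it is worse on P by at least 1, which the new ballot, contributing at most 1,
  cannot make up. So stability holds for every rule whose cost is bounded by 1.

  The four remaining rules have unbounded costs, and small instability witnesses (on four or five
  candidates) are verified by enumerating all axes. To make this enumeration executable, an axis is
  represented by the list of candidates in axis order, and each cost is computed on that list.\<close>

fun precedes :: "'a list \<Rightarrow> 'a \<Rightarrow> 'a \<Rightarrow> bool" where
  "precedes [] x y = False"
| "precedes (z # zs) x y = ((x = z \<and> y \<in> set zs) \<or> precedes zs x y)"

definition axis_of :: "'a list \<Rightarrow> ('a \<times> 'a) set" where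
  "axis_of xs = {(x, y). precedes xs x y}"

lemma in_axis_of [simp]: "(x, y) \<in> axis_of xs \<longleftrightarrow> precedes xs x y"
  by (simp add: axis_of_def)

lemma axis_of_Cons: "axis_of (m # xs) = Pair m ` set xs \<union> axis_of xs"
  by (auto simp: axis_of_def)

lemma precedes_in_set: "precedes xs x y \<Longrightarrow> x \<in> set xs \<and> y \<in> set xs"
  by (induction xs) auto

lemma precedes_irrefl: "distinct xs \<Longrightarrow> \<not> precedes xs x x"
  by (induction xs) (auto dest: precedes_in_set)

lemma precedes_trans: "distinct xs \<Longrightarrow> precedes xs x y \<Longrightarrow> precedes xs y z \<Longrightarrow> precedes xs x z"
  by (induction xs) (auto dest: precedes_in_set)

lemma precedes_total:
  "x \<in> set xs \<Longrightarrow> y \<in> set xs \<Longrightarrow> x \<noteq> y \<Longrightarrow> precedes xs x y \<or> precedes xs y x"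
  by (induction xs) auto

lemma axis_of_in_axes: "distinct xs \<Longrightarrow> axis_of xs \<in> axes (set xs)"
  unfolding axes_def strict_linear_order_on_def
  by (auto simp: trans_def irrefl_def total_on_def
      dest: precedes_in_set precedes_irrefl precedes_trans precedes_total)

lemma axes_nonempty: "finite C \<Longrightarrow> axes C \<noteq> {}"
  using finite_distinct_list[of C] axis_of_in_axes by blast

lemma axis_restrict: "r \<in> axes C \<Longrightarrow> D \<subseteq> C \<Longrightarrow> r \<inter> (D \<times> D) \<in> axes D"
  unfolding axes_def strict_linear_order_on_def trans_def irrefl_def total_on_def by blast

lemma axis_has_least:
  assumes "finite C" "C \<noteq> {}" "r \<in> axes C"
  obtains m where "m \<in> C" "\<And>x. x \<in> C \<Longrightarrow> x \<noteq> m \<Longrightarrow> (m, x) \<in> r"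
proof -
  have lin: "trans r" "irrefl r" "total_on C r" "r \<subseteq> C \<times> C"
    using assms(3) by (auto simp: axes_def strict_linear_order_on_def)
  then have "wf r"
    using assms(1) by (intro finite_acyclic_wf) (auto simp: acyclic_irrefl intro: finite_subset)
  then obtain m where "m \<in> C" "\<And>y. (y, m) \<in> r \<Longrightarrow> y \<notin> C"
    using wfE_min'[OF \<open>wf r\<close> assms(2)] by blast
  with lin(3) show ?thesis
    by (intro that) (auto simp: total_on_def)
qed

lemma axis_split_least:
  assumes r: "r \<in> axes C" and m: "m \<in> C" "\<And>x. x \<in> C \<Longrightarrow> x \<noteq> m \<Longrightarrow> (m, x) \<in> r"
  shows "r = Pair m ` (C - {m}) \<union> r \<inter> ((C - {m}) \<times> (C - {m}))"
proof -
  have "trans r" "irrefl r" "r \<subseteq> C \<times> C"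
    using r by (auto simp: axes_def strict_linear_order_on_def)
  then have "(a, m) \<notin> r" for a
    using m by (cases "a = m") (auto simp: irrefl_def dest: transD)
  with \<open>r \<subseteq> C \<times> C\<close> m show ?thesis by fast
qed

lemma axes_eq_axis_of:
  assumes "finite C" "r \<in> axes C"
  shows "\<exists>xs. distinct xs \<and> set xs = C \<and> r = axis_of xs"
  using assms
proof (induction "card C" arbitrary: C r)
  case 0
  then show ?case by (auto simp: axes_def axis_of_def)
next
  case (Suc n)
  then have "C \<noteq> {}" by auto
  then obtain m where m: "m \<in> C" "\<And>x. x \<in> C \<Longrightarrow> x \<noteq> m \<Longrightarrow> (m, x) \<in> r"
    using axis_has_least[OF Suc.prems(1) _ Suc.prems(2)] by blast
  have "n = card (C - {m})" "finite (C - {m})"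
    using Suc.hyps(2) Suc.prems(1) m(1) by auto
  then obtain xs where xs: "distinct xs" "set xs = C - {m}"
      "r \<inter> ((C - {m}) \<times> (C - {m})) = axis_of xs"
    using Suc.hyps(1) axis_restrict[OF Suc.prems(2), of "C - {m}"] by blast
  then have "r = axis_of (m # xs)"
    using axis_split_least[OF Suc.prems(2) m] by (simp add: axis_of_Cons)
  with xs m(1) show ?case
    by (intro exI[of _ "m # xs"]) auto
qed

lemma set_permutations_of_list_impl_iff:
  assumes "distinct L"
  shows "xs \<in> set (permutations_of_list_impl L) \<longleftrightarrow> distinct xs \<and> set xs = set L"
proof -
  from assms have "set (permutations_of_list_impl L) = permutations_of_set (set L)"
    by (simp add: set_permutations_of_list_impl permutations_of_set_altdef mset_set_set)
  then show ?thesis by (auto simp: permutations_of_set_def)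
qed

lemma total_cost_append:
  "total_cost cost C (P @ [A]) r = total_cost cost C P r + cost C A r"
  by (simp add: total_cost_def)

lemma axes_finite: "finite C \<Longrightarrow> finite (axes C)"
  by (rule finite_subset[of _ "Pow (C \<times> C)"]) (auto simp: axes_def)

lemma scoring_rule_nonempty:
  assumes "finite (axes C)" "axes C \<noteq> {}"
  shows "scoring_rule cost C P \<noteq> {}"
  using ex_is_arg_min_if_finite[OF assms, of "total_cost cost C P"]
  by (auto simp: scoring_rule_def is_arg_min_linorder)

lemma scoring_rule_stable_if_cost_le_1:
  assumes fin: "finite (axes C)" and ne: "axes C \<noteq> {}" and le_1: "\<And>r. cost C A r \<le> 1"
  shows "scoring_rule cost C P \<inter> scoring_rule cost C (P @ [A]) \<noteq> {}"
proof -
  let ?S = "scoring_rule cost C P" and ?t = "total_cost cost C P"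
  have "finite ?S" "?S \<noteq> {}"
    using fin scoring_rule_nonempty[OF fin ne] by (auto simp: scoring_rule_def)
  then obtain r where r: "r \<in> ?S" and r_min_A: "\<And>r'. r' \<in> ?S \<Longrightarrow> cost C A r \<le> cost C A r'"
    using ex_is_arg_min_if_finite[of ?S "cost C A"] by (auto simp: is_arg_min_linorder)
  have "?t r + cost C A r \<le> ?t r' + cost C A r'" if r': "r' \<in> axes C" for r'
  proof (cases "r' \<in> ?S")
    case True
    then show ?thesis using r r_min_A[OF True] by (force simp: scoring_rule_def)
  next
    case False
    then have "?t r < ?t r'"
      using r r' by (force simp: scoring_rule_def not_le)
    then show ?thesis using le_1[of r] by linarith
  qed
  then have "r \<in> scoring_rule cost C (P @ [A])"
    using r by (simp add: scoring_rule_def total_cost_append)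
  with r show ?thesis by blast
qed

lemma VD_stable:
  "finite C \<Longrightarrow> scoring_rule cost_VD C P \<inter> scoring_rule cost_VD C (P @ [A]) \<noteq> {}"
  by (rule scoring_rule_stable_if_cost_le_1) (auto simp: axes_finite axes_nonempty cost_VD_def)

lemma card_Collect_eq_length_filter:
  "distinct xs \<Longrightarrow> A \<subseteq> set xs \<Longrightarrow> card {x \<in> A. P x} = length (filter (\<lambda>x. x \<in> A \<and> P x) xs)"
  by (simp add: distinct_length_filter Int_absorb2 subset_iff)

lemma card_Collect_diff_eq_length_filter:
  assumes "distinct xs"
  shows "card {x \<in> set xs - A. P x} = length (filter (\<lambda>x. x \<notin> A \<and> P x) xs)"
proof -
  have "{x \<in> set xs - A. P x} = {x. x \<notin> A \<and> P x} \<inter> set xs" by blast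
  with assms show ?thesis by (simp only: distinct_length_filter)
qed

lemma sum_diff_eq_sum_list_filter:
  "distinct xs \<Longrightarrow> (\<Sum>x\<in>set xs - A. g x) = sum_list (map g (filter (\<lambda>x. x \<notin> A) xs))"
  by (simp add: sum_list_distinct_conv_sum_set set_diff_eq)

definition left_count :: "'a list \<Rightarrow> 'a set \<Rightarrow> 'a \<Rightarrow> nat" where
  "left_count xs A x = length (filter (\<lambda>y. y \<in> A \<and> precedes xs y x) xs)"

definition right_count :: "'a list \<Rightarrow> 'a set \<Rightarrow> 'a \<Rightarrow> nat" where
  "right_count xs A x = length (filter (\<lambda>y. y \<in> A \<and> precedes xs x y) xs)"

definition cost_MF_list :: "'a list \<Rightarrow> 'a set \<Rightarrow> nat" where
  "cost_MF_list xs A = Min (set (map (\<lambda>(x, y).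
        length (filter (\<lambda>z. z \<in> A \<and> (precedes xs z x \<or> precedes xs y z)) xs)
      + length (filter (\<lambda>z. z \<notin> A \<and> precedes xs x z \<and> precedes xs z y) xs))
    (filter (\<lambda>(x, y). x \<in> A \<and> y \<in> A \<and> (x = y \<or> precedes xs x y)) (List.product xs xs))))"

definition cost_BC_list :: "'a list \<Rightarrow> 'a set \<Rightarrow> nat" where
  "cost_BC_list xs A =
    length (filter (\<lambda>b. b \<notin> A \<and> (\<exists>a\<in>A. \<exists>c\<in>A. precedes xs a b \<and> precedes xs b c)) xs)"

definition cost_MS_list :: "'a list \<Rightarrow> 'a set \<Rightarrow> nat" where
  "cost_MS_list xs A =
    sum_list (map (\<lambda>x. min (left_count xs A x) (right_count xs A x)) (filter (\<lambda>x. x \<notin> A) xs))"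

definition cost_FT_list :: "'a list \<Rightarrow> 'a set \<Rightarrow> nat" where
  "cost_FT_list xs A =
    sum_list (map (\<lambda>x. left_count xs A x * right_count xs A x) (filter (\<lambda>x. x \<notin> A) xs))"

lemma cost_MF_axis_of:
  assumes "distinct xs" "A \<subseteq> set xs"
  shows "cost_MF (set xs) A (axis_of xs) = cost_MF_list xs A"
proof -
  have "{(x, y). x \<in> A \<and> y \<in> A \<and> (x = y \<or> (x, y) \<in> axis_of xs)}
      = set (filter (\<lambda>(x, y). x \<in> A \<and> y \<in> A \<and> (x = y \<or> precedes xs x y)) (List.product xs xs))"
    using assms(2) by auto
  then show ?thesis
    unfolding cost_MF_def cost_MF_list_def in_axis_of set_map
      card_Collect_eq_length_filter[OF assms] card_Collect_diff_eq_length_filter[OF assms(1)]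
    by simp
qed

lemma cost_BC_axis_of:
  "distinct xs \<Longrightarrow> A \<subseteq> set xs \<Longrightarrow> cost_BC (set xs) A (axis_of xs) = cost_BC_list xs A"
  unfolding cost_BC_def cost_BC_list_def in_axis_of by (rule card_Collect_diff_eq_length_filter)

lemma cost_MS_axis_of:
  "distinct xs \<Longrightarrow> A \<subseteq> set xs \<Longrightarrow> cost_MS (set xs) A (axis_of xs) = cost_MS_list xs A"
  by (simp add: cost_MS_def cost_MS_list_def left_count_def right_count_def card_Collect_eq_length_filter
      sum_diff_eq_sum_list_filter)

lemma cost_FT_axis_of:
  "distinct xs \<Longrightarrow> A \<subseteq> set xs \<Longrightarrow> cost_FT (set xs) A (axis_of xs) = cost_FT_list xs A"
  by (simp add: cost_FT_def cost_FT_list_def left_count_def right_count_def card_Collect_eq_length_filter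
      sum_diff_eq_sum_list_filter)

lemma unstable_by_enumeration:
  fixes cost :: "nat set \<Rightarrow> nat set \<Rightarrow> (nat \<times> nat) set \<Rightarrow> nat"
    and cost_list :: "nat list \<Rightarrow> nat set \<Rightarrow> nat"
  assumes cost_list: "\<And>xs A. distinct xs \<Longrightarrow> A \<subseteq> set xs \<Longrightarrow> cost (set xs) A (axis_of xs) = cost_list xs A"
    and L: "distinct L" and ballots: "\<forall>B\<in>set (A # P). B \<noteq> {} \<and> B \<subseteq> set L"
    and u: "u \<in> set (permutations_of_list_impl L)" and v: "v \<in> set (permutations_of_list_impl L)"
    and beaten: "\<forall>xs \<in> set (permutations_of_list_impl L).
        sum_list (map (cost_list u) P) < sum_list (map (cost_list xs) P)
      \<or> sum_list (map (cost_list v) (P @ [A])) < sum_list (map (cost_list xs) (P @ [A]))"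
  shows "\<exists>C P A. finite C \<and> is_profile C P \<and> is_ballot C A \<and>
           scoring_rule cost C P \<inter> scoring_rule cost C (P @ [A]) = {}"
proof (intro exI conjI)
  let ?C = "set L"
  have perm: "xs \<in> set (permutations_of_list_impl L) \<longleftrightarrow> distinct xs \<and> set xs = ?C" for xs
    using set_permutations_of_list_impl_iff[OF L] .
  have total: "total_cost cost ?C Q (axis_of xs) = sum_list (map (cost_list xs) Q)"
    if "xs \<in> set (permutations_of_list_impl L)" "\<forall>B\<in>set Q. B \<subseteq> ?C" for xs Q
    using that cost_list unfolding total_cost_def perm
    by (metis (no_types, lifting) map_eq_conv)
  have axis: "axis_of xs \<in> axes ?C" if "xs \<in> set (permutations_of_list_impl L)" for xs
    by (metis that perm axis_of_in_axes)
  show "scoring_rule cost ?C P \<inter> scoring_rule cost ?C (P @ [A]) = {}"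
  proof (rule ccontr)
    assume "\<not> ?thesis"
    then obtain r where r: "r \<in> scoring_rule cost ?C P" "r \<in> scoring_rule cost ?C (P @ [A])"
      by auto
    then obtain xs where xs: "xs \<in> set (permutations_of_list_impl L)" and "r = axis_of xs"
      using axes_eq_axis_of[of ?C r] perm by (auto simp: scoring_rule_def)
    then have "total_cost cost ?C P (axis_of xs) \<le> total_cost cost ?C P (axis_of u)"
      "total_cost cost ?C (P @ [A]) (axis_of xs) \<le> total_cost cost ?C (P @ [A]) (axis_of v)"
      using r axis[OF u] axis[OF v] by (auto simp: scoring_rule_def)
    with beaten xs ballots show False
      using total[OF u] total[OF v] total[OF xs] by fastforce
  qed
qed (use ballots in \<open>auto simp: is_profile_def is_ballot_def\<close>)

lemma MF_unstable:
  "\<exists>(C :: nat set) P A. finite C \<and> is_profile C P \<and> is_ballot C A \<and>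
     scoring_rule cost_MF C P \<inter> scoring_rule cost_MF C (P @ [A]) = {}"
  by (rule unstable_by_enumeration[where cost_list = cost_MF_list and L = "[0, 1, 2, 3, 4]"
        and P = "[{0, 1}, {0, 2}, {1, 3}, {0, 2, 4}]" and A = "{0, 3, 4}"
        and u = "[3, 1, 0, 2, 4]" and v = "[1, 3, 4, 0, 2]"], fact cost_MF_axis_of) code_simp+

lemma BC_unstable:
  "\<exists>(C :: nat set) P A. finite C \<and> is_profile C P \<and> is_ballot C A \<and>
     scoring_rule cost_BC C P \<inter> scoring_rule cost_BC C (P @ [A]) = {}"
  by (rule unstable_by_enumeration[where cost_list = cost_BC_list and L = "[0, 1, 2, 3]"
        and P = "[{0, 1, 2}, {0, 1, 3}]" and A = "{2, 3}"
        and u = "[2, 0, 1, 3]" and v = "[0, 1, 2, 3]"], fact cost_BC_axis_of) code_simp+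

lemma MS_unstable:
  "\<exists>(C :: nat set) P A. finite C \<and> is_profile C P \<and> is_ballot C A \<and>
     scoring_rule cost_MS C P \<inter> scoring_rule cost_MS C (P @ [A]) = {}"
  by (rule unstable_by_enumeration[where cost_list = cost_MS_list and L = "[0, 1, 2, 3]"
        and P = "[{0, 1, 2}, {0, 1, 3}]" and A = "{2, 3}"
        and u = "[2, 0, 1, 3]" and v = "[0, 1, 2, 3]"], fact cost_MS_axis_of) code_simp+

lemma FT_unstable:
  "\<exists>(C :: nat set) P A. finite C \<and> is_profile C P \<and> is_ballot C A \<and>
     scoring_rule cost_FT C P \<inter> scoring_rule cost_FT C (P @ [A]) = {}"
  by (rule unstable_by_enumeration[where cost_list = cost_FT_list and L = "[0, 1, 2, 3]"
        and P = "[{0, 1}, {0, 2}]" and A = "{1, 2, 3}"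
        and u = "[1, 0, 2, 3]" and v = "[0, 1, 2, 3]"], fact cost_FT_axis_of) code_simp+

theorem mainTheorem5:
  shows "(\<forall>(C :: 'a set) P A. finite C \<longrightarrow> is_profile C P \<longrightarrow> is_ballot C A \<longrightarrow>
            scoring_rule cost_VD C P \<inter> scoring_rule cost_VD C (P @ [A]) \<noteq> {})
       \<and> (\<forall>cost \<in> {cost_MF, cost_BC, cost_MS, cost_FT}.
            \<exists>(C :: nat set) P A. finite C \<and> is_profile C P \<and> is_ballot C A \<and>
              scoring_rule cost C P \<inter> scoring_rule cost C (P @ [A]) = {})"
  using VD_stable MF_unstable BC_unstable MS_unstable FT_unstable by auto

end
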